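(* Let $\mathcal{M}\subseteq\mathbb{S}^n$ be finite. If $\mathcal{T}(\mathcal{M}')$ is rank-one generated for every $\mathcal{M}'\subseteq\mathcal{M}$, then $\mathcal{S}(\mathcal{M})$ is rank-one generated.
   Context: $\mathbb{S}^n$ denotes real symmetric $n\times n$ matrices with $\langle A,B\rangle=\mathrm{tr}(AB)$, $\mathbb{S}^n_+$ the PSD cone. For $\mathcal{M}\subseteq\mathbb{S}^n$, $\mathcal{S}(\mathcal{M})=\{X\in\mathbb{S}^n_+:\langle M,X\rangle\ge0\ \forall M\in\mathcal{M}\}$ and $\mathcal{T}(\mathcal{M})=\{X\in\mathbb{S}^n_+:\langle M,X\rangle=0\ \forall M\in\mathcal{M}\}$ (so $\mathcal{T}(\emptyset)=\mathbb{S}^n_+$). A closed convex cone $\mathcal{S}\subseteq\mathbb{S}^n_+$ is rank-one generated (ROG) if $\mathcal{S}=\mathrm{conv}(\mathcal{S}\cap\{xx^\top:x\in\mathbb{R}^n\})$. *)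

theory Defs
  imports "HOL-Analysis.Analysis"
begin

definition sym_mat :: "real^'n^'n \<Rightarrow> bool" where
  "sym_mat A \<longleftrightarrow> transpose A = A"

definition trace_ip :: "real^'n^'n \<Rightarrow> real^'n^'n \<Rightarrow> real" where
  "trace_ip A B = (\<Sum>i\<in>UNIV. \<Sum>j\<in>UNIV. A $ i $ j * B $ j $ i)"

definition psd_cone :: "(real^'n^'n) set" where
  "psd_cone = {X. sym_mat X \<and> (\<forall>x. x \<bullet> (X *v x) \<ge> 0)}"

definition outer :: "real^'n \<Rightarrow> real^'n^'n" where
  "outer x = (\<chi> i j. x $ i * x $ j)"

definition rank_one_mats :: "(real^'n^'n) set" where
  "rank_one_mats = range outer"

definition S_set :: "(real^'n^'n) set \<Rightarrow> (real^'n^'n) set" where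
  "S_set M = {X \<in> psd_cone. \<forall>A\<in>M. trace_ip A X \<ge> 0}"

definition T_set :: "(real^'n^'n) set \<Rightarrow> (real^'n^'n) set" where
  "T_set M = {X \<in> psd_cone. \<forall>A\<in>M. trace_ip A X = 0}"

definition ROG :: "(real^'n^'n) set \<Rightarrow> bool" where
  "ROG S \<longleftrightarrow> closed S \<and> convex S \<and> cone S \<and> S \<subseteq> psd_cone \<and>
     S = convex hull (S \<inter> rank_one_mats)"

end

theory Submission
  imports Defs
begin

text \<open>Induct on the number of constraints that are inactive at \<open>X \<in> S(M)\<close>. If \<open>J\<close> is the
active set, then \<open>X \<in> T(J)\<close> is a sum of rank-one matrices \<open>R \<in> T(J)\<close>. Moving from \<open>X\<close>
along \<open>-R\<close> (until the summand \<open>R\<close> is used up or a new constraint becomes active) and along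
\<open>+R\<close> (until a new constraint becomes active; if none does, \<open>R\<close> itself lies in \<open>S(M)\<close>)
stays inside \<open>S(M)\<close>, and \<open>X\<close> is a convex combination of the two endpoints. Each endpoint has a
larger active set or one summand fewer, so it lies in the convex hull of the rank-one
elements of \<open>S(M)\<close> by induction. Only linearity of \<open>X \<mapsto> \<langle>A, X\<rangle>\<close>, convexity of the PSD cone and
invariance of the rank-one matrices under nonnegative scaling are used (in particular the
symmetry of the \<open>A \<in> M\<close> is not), so the argument is carried out for an arbitrary convex cone
cut by finitely many linear inequalities.\<close>

lemma convex_cone_sum:
  assumes "convex_cone C" "finite I" "\<And>i. i \<in> I \<Longrightarrow> f i \<in> C"
  shows "(\<Sum>i\<in>I. f i) \<in> C"
  using assms(2,3)
  by (induction I rule: finite_induct)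
    (auto simp: convex_cone_contains_0[OF assms(1)] convex_cone_add[OF assms(1)])

lemma convex_cone_convex_hull:
  assumes "cone S" "0 \<in> S"
  shows "convex_cone (convex hull S)"
proof -
  have "0 \<in> convex hull S"
    by (rule hull_inc[OF assms(2)])
  then show ?thesis
    using cone_convex_hull[OF assms(1)] by (auto simp: convex_cone_def conic_def cone_def)
qed

lemma min_ratio_step:
  fixes z d :: "'i \<Rightarrow> real"
  assumes "finite M" "\<And>A. A \<in> M \<Longrightarrow> 0 \<le> z A" "\<And>A. A \<in> M \<Longrightarrow> z A = 0 \<Longrightarrow> d A = 0"
    and "\<exists>A\<in>M. d A < 0"
  obtains t where "0 < t" "\<And>A. A \<in> M \<Longrightarrow> 0 \<le> z A + t * d A"
    and "\<exists>A\<in>M. d A < 0 \<and> z A + t * d A = 0"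
proof -
  define B where "B = {A\<in>M. d A < 0}"
  define t where "t = Min ((\<lambda>A. z A / - d A) ` B)"
  have B: "finite B" "B \<noteq> {}"
    using assms(1,4) by (auto simp: B_def)
  have "0 < z A / - d A" if "A \<in> B" for A
  proof -
    have "0 < z A"
      using that assms(2,3) by (force simp: B_def order_le_less)
    then show ?thesis
      using that by (simp add: B_def divide_pos_neg)
  qed
  then have "0 < t"
    using B by (simp add: t_def)
  moreover have "0 \<le> z A + t * d A" if "A \<in> M" for A
  proof (cases "d A < 0")
    case True
    then have "t \<le> z A / - d A"
      using that B by (simp add: t_def B_def)
    then have "t * - d A \<le> z A"
      using True by (subst (asm) pos_le_divide_eq) auto
    then show ?thesis
      by simp
  next
    case False
    then show ?thesis
      using that assms(2) \<open>0 < t\<close> by simp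
  qed
  moreover have "t \<in> (\<lambda>A. z A / - d A) ` B"
    unfolding t_def using B by (intro Min_in) auto
  then obtain A where "A \<in> B" "t = z A / - d A"
    by blast
  then have "\<exists>A\<in>M. d A < 0 \<and> z A + t * d A = 0"
    by (auto simp: B_def)
  ultimately show thesis
    using that by blast
qed

locale constrained_cone =
  fixes K :: "'a::real_vector set" and \<phi> :: "'i \<Rightarrow> 'a \<Rightarrow> real" and M :: "'i set"
  assumes finite_M: "finite M"
    and convex_cone_K: "convex_cone K"
    and linear_\<phi>: "\<And>A. A \<in> M \<Longrightarrow> linear (\<phi> A)"
begin

definition S :: "'a set" where
  "S = {x \<in> K. \<forall>A\<in>M. 0 \<le> \<phi> A x}"

definition T :: "'i set \<Rightarrow> 'a set" where
  "T J = {x \<in> K. \<forall>A\<in>J. \<phi> A x = 0}"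

definition active :: "'a \<Rightarrow> 'i set" where
  "active x = {A \<in> M. \<phi> A x = 0}"

lemma \<phi>_add_scaleR: "A \<in> M \<Longrightarrow> \<phi> A (x + c *\<^sub>R y) = \<phi> A x + c * \<phi> A y"
  by (simp add: linear_\<phi> linear_add linear_scale)

lemma \<phi>_diff_scaleR: "A \<in> M \<Longrightarrow> \<phi> A (x - c *\<^sub>R y) = \<phi> A x - c * \<phi> A y"
  by (simp add: linear_\<phi> linear_diff linear_scale)

lemma convex_cone_T: "J \<subseteq> M \<Longrightarrow> convex_cone (T J)"
  using convex_cone_K \<phi>_add_scaleR[where c = 1] \<phi>_add_scaleR[where x = 0]
  by (auto simp: convex_cone_iff T_def subset_iff linear_\<phi> linear_0)

lemma convex_cone_S: "convex_cone S"
  using convex_cone_K \<phi>_add_scaleR[where c = 1] \<phi>_add_scaleR[where x = 0]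
  by (auto simp: convex_cone_iff S_def linear_\<phi> linear_0)

lemma mem_T_active: "x \<in> S \<Longrightarrow> x \<in> T (active x)"
  by (simp add: S_def T_def active_def)

lemma step_to_new_active:
  assumes "\<And>A. A \<in> M \<Longrightarrow> 0 \<le> \<phi> A Z" "\<And>A. A \<in> active Z \<Longrightarrow> \<phi> A D = 0" "\<exists>A\<in>M. \<phi> A D < 0"
  obtains t where "0 < t" "\<forall>A\<in>M. 0 \<le> \<phi> A (Z + t *\<^sub>R D)"
    and "active Z \<subset> active (Z + t *\<^sub>R D)"
proof -
  obtain t where t: "0 < t" "\<And>A. A \<in> M \<Longrightarrow> 0 \<le> \<phi> A Z + t * \<phi> A D"
    and new: "\<exists>A\<in>M. \<phi> A D < 0 \<and> \<phi> A Z + t * \<phi> A D = 0"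
    using min_ratio_step[of M "\<lambda>A. \<phi> A Z" "\<lambda>A. \<phi> A D"] finite_M assms by (auto simp: active_def)
  have "active Z \<subseteq> active (Z + t *\<^sub>R D)"
    using assms(2) by (auto simp: active_def \<phi>_add_scaleR)
  moreover have "active Z \<noteq> active (Z + t *\<^sub>R D)"
    using new assms(2) by (force simp: active_def \<phi>_add_scaleR)
  ultimately show thesis
    using that t by (simp add: \<phi>_add_scaleR)
qed

lemma shrink_step:
  assumes "Z \<in> S" "\<And>A. A \<in> active Z \<Longrightarrow> \<phi> A R = 0" "Z - R \<in> K"
  obtains s where "0 < s" "s \<le> 1" "Z - s *\<^sub>R R \<in> S"
    and "s = 1 \<or> active Z \<subset> active (Z - s *\<^sub>R R)"
proof -
  have Z: "Z \<in> K" "\<And>A. A \<in> M \<Longrightarrow> 0 \<le> \<phi> A Z"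
    using assms(1) by (auto simp: S_def)
  have in_K: "Z - s *\<^sub>R R \<in> K" if "0 \<le> s" "s \<le> 1" for s
  proof -
    have "Z - s *\<^sub>R R = (1 - s) *\<^sub>R Z + s *\<^sub>R (Z - R)"
      by (simp add: algebra_simps)
    then show ?thesis
      using convexD[of K Z "Z - R" "1 - s" s] convex_cone_K Z(1) assms(3) that
      by (simp add: convex_cone_def)
  qed
  show thesis
  proof (cases "\<exists>A\<in>M. 0 < \<phi> A R")
    case True
    then have decreasing: "\<exists>A\<in>M. \<phi> A (- R) < 0"
      by (simp add: linear_\<phi> linear_neg)
    have "\<And>A. A \<in> active Z \<Longrightarrow> \<phi> A (- R) = 0"
      using assms(2) by (simp add: active_def linear_\<phi> linear_neg)
    then obtain t where "0 < t" "\<forall>A\<in>M. 0 \<le> \<phi> A (Z + t *\<^sub>R - R)"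
      and "active Z \<subset> active (Z + t *\<^sub>R - R)"
      using step_to_new_active[OF Z(2) _ decreasing] by blast
    then have t: "0 < t" "\<forall>A\<in>M. 0 \<le> \<phi> A (Z - t *\<^sub>R R)"
      and new: "active Z \<subset> active (Z - t *\<^sub>R R)"
      by simp_all
    define s where "s = min 1 t"
    have "0 \<le> \<phi> A (Z - s *\<^sub>R R)" if "A \<in> M" for A
    proof (cases "0 < \<phi> A R")
      case True
      then have "s * \<phi> A R \<le> t * \<phi> A R"
        by (simp add: s_def)
      moreover have "t * \<phi> A R \<le> \<phi> A Z"
        using t(2) that by (simp add: \<phi>_diff_scaleR)
      ultimately show ?thesis
        using that by (simp add: \<phi>_diff_scaleR)
    next
      case False
      then have "s * \<phi> A R \<le> 0"
        using t(1) by (simp add: s_def mult_nonneg_nonpos)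
      then show ?thesis
        using Z(2)[OF that] that by (simp add: \<phi>_diff_scaleR)
    qed
    then have "Z - s *\<^sub>R R \<in> S"
      using in_K t(1) by (simp add: S_def s_def)
    moreover have "s = 1 \<or> active Z \<subset> active (Z - s *\<^sub>R R)"
      using new by (auto simp: s_def min_def)
    moreover have "0 < s" "s \<le> 1"
      using t(1) by (auto simp: s_def)
    ultimately show thesis
      using that by blast
  next
    case False
    have "0 \<le> \<phi> A (Z - R)" if "A \<in> M" for A
    proof -
      have "\<phi> A R \<le> 0"
        using False that by (auto simp: not_less)
      then show ?thesis
        using Z(2)[OF that] by (simp add: linear_\<phi>[OF that] linear_diff)
    qed
    then have "Z - 1 *\<^sub>R R \<in> S"
      using in_K[of 1] by (simp add: S_def)
    then show thesis
      using that[of 1] by simp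
  qed
qed

context
  fixes G :: "'a set"
  assumes cone_G: "cone G" and zero_in_G: "0 \<in> G"
begin

lemma convex_cone_hull_S_G: "convex_cone (convex hull (S \<inter> G))"
proof (rule convex_cone_convex_hull)
  show "cone (S \<inter> G)"
    using convex_cone_S cone_G by (auto simp: cone_def convex_cone_iff)
  show "0 \<in> S \<inter> G"
    using convex_cone_S zero_in_G by (simp add: convex_cone_contains_0)
qed

lemma mem_hull_by_splitting:
  assumes Z: "Z \<in> S" and R: "R \<in> T (active Z) \<inter> G" "Z - R \<in> K"
    and shrunk: "Z - R \<in> S \<Longrightarrow> Z - R \<in> convex hull (S \<inter> G)"
    and larger: "\<And>Y. Y \<in> S \<Longrightarrow> active Z \<subset> active Y \<Longrightarrow> Y \<in> convex hull (S \<inter> G)"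
  shows "Z \<in> convex hull (S \<inter> G)"
proof -
  let ?C = "convex hull (S \<inter> G)"
  have R_zero: "\<And>A. A \<in> active Z \<Longrightarrow> \<phi> A R = 0"
    using R(1) by (simp add: T_def)
  obtain s where s: "0 < s" "s \<le> 1" "Z - s *\<^sub>R R \<in> S"
    and "s = 1 \<or> active Z \<subset> active (Z - s *\<^sub>R R)"
    using shrink_step[OF Z R_zero R(2)] .
  then have Z'_C: "Z - s *\<^sub>R R \<in> ?C"
    using shrunk larger by auto
  show ?thesis
  proof (cases "R \<in> S")
    case True
    then have "s *\<^sub>R R \<in> ?C"
      using R(1) s(1) convex_cone_hull_S_G
      by (simp add: convex_cone_scaleR hull_inc)
    then have "(Z - s *\<^sub>R R) + s *\<^sub>R R \<in> ?C"
      by (rule convex_cone_add[OF convex_cone_hull_S_G Z'_C])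
    then show ?thesis
      by simp
  next
    case False
    have "R \<in> K"
      using R(1) by (simp add: T_def)
    then have "\<exists>A\<in>M. \<phi> A R < 0"
      using False by (auto simp: S_def not_le)
    then obtain t where t: "0 < t" "\<forall>A\<in>M. 0 \<le> \<phi> A (Z + t *\<^sub>R R)"
      and new: "active Z \<subset> active (Z + t *\<^sub>R R)"
      using step_to_new_active[of Z R] Z R_zero by (auto simp: S_def)
    have "Z + t *\<^sub>R R \<in> K"
      using Z \<open>R \<in> K\<close> t(1) convex_cone_K
      by (simp add: S_def convex_cone_add convex_cone_scaleR)
    then have Y_C: "Z + t *\<^sub>R R \<in> ?C"
      using larger new t(2) by (simp add: S_def)
    have "(s + t) *\<^sub>R Z = t *\<^sub>R (Z - s *\<^sub>R R) + s *\<^sub>R (Z + t *\<^sub>R R)"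
      by (simp add: algebra_simps)
    also have "\<dots> \<in> ?C"
      using Z'_C Y_C s(1) t(1) convex_cone_hull_S_G
      by (simp add: convex_cone_add convex_cone_scaleR)
    finally have "inverse (s + t) *\<^sub>R ((s + t) *\<^sub>R Z) \<in> ?C"
      by (rule convex_cone_scaleR[OF convex_cone_hull_S_G, rotated]) (use s(1) t(1) in simp)
    then show ?thesis
      using s(1) t(1) by simp
  qed
qed

lemma sum_mem_hull:
  assumes larger: "\<And>Y. Y \<in> S \<Longrightarrow> J \<subset> active Y \<Longrightarrow> Y \<in> convex hull (S \<inter> G)"
    and "J \<subseteq> M" "finite I" "\<And>i. i \<in> I \<Longrightarrow> R i \<in> T J \<inter> G"
  shows "(\<Sum>i\<in>I. R i) \<in> S \<Longrightarrow> (\<Sum>i\<in>I. R i) \<in> convex hull (S \<inter> G)"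
  using assms(3,4)
proof (induction I rule: finite_induct)
  case empty
  show ?case
    using convex_cone_hull_S_G by (simp add: convex_cone_contains_0)
next
  case (insert i I)
  let ?Z = "R i + (\<Sum>i\<in>I. R i)"
  have rest_T: "(\<Sum>i\<in>I. R i) \<in> T J"
    using insert.prems(2) convex_cone_T[OF \<open>J \<subseteq> M\<close>] \<open>finite I\<close>
    by (intro convex_cone_sum) auto
  have "?Z \<in> T J"
    using insert.prems(2) rest_T convex_cone_T[OF \<open>J \<subseteq> M\<close>] by (simp add: convex_cone_add)
  then have "J \<subseteq> active ?Z"
    using \<open>J \<subseteq> M\<close> by (auto simp: T_def active_def)
  moreover have Z: "?Z \<in> S"
    using insert by simp
  moreover have "?Z \<in> convex hull (S \<inter> G)" if "active ?Z = J"
  proof (rule mem_hull_by_splitting[OF Z])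
    show "R i \<in> T (active ?Z) \<inter> G"
      using insert.prems(2) that by simp
    show "?Z - R i \<in> K" "?Z - R i \<in> S \<Longrightarrow> ?Z - R i \<in> convex hull (S \<inter> G)"
      using rest_T insert.IH insert.prems(2) by (auto simp: T_def)
    show "\<And>Y. Y \<in> S \<Longrightarrow> active ?Z \<subset> active Y \<Longrightarrow> Y \<in> convex hull (S \<inter> G)"
      using larger that by blast
  qed
  ultimately show ?case
    using larger insert.hyps by (auto simp: psubset_eq)
qed

lemma S_eq_convex_hull:
  assumes generated: "\<And>J. J \<subseteq> M \<Longrightarrow> T J \<subseteq> convex hull (T J \<inter> G)"
  shows "S = convex hull (S \<inter> G)"
proof
  show "convex hull (S \<inter> G) \<subseteq> S"
    using convex_cone_S by (intro hull_minimal) (auto simp: convex_cone_def)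
  have "X \<in> convex hull (S \<inter> G)" if "X \<in> S" "card (M - active X) = k" for X k
    using that
  proof (induction k arbitrary: X rule: less_induct)
    case (less k)
    define J where "J = active X"
    have J: "J \<subseteq> M"
      by (simp add: J_def active_def)
    have "X \<in> convex hull (T J \<inter> G)"
      using generated[OF J] mem_T_active[OF less.prems(1)] by (auto simp: J_def)
    then obtain F u where F: "finite F" "F \<subseteq> T J \<inter> G" "\<And>v. v \<in> F \<Longrightarrow> 0 \<le> u v"
      and X: "X = (\<Sum>v\<in>F. u v *\<^sub>R v)"
      unfolding convex_hull_explicit by blast
    have terms: "u v *\<^sub>R v \<in> T J \<inter> G" if "v \<in> F" for v
      using F that convex_cone_T[OF J] cone_G by (auto simp: convex_cone_scaleR cone_def)
    have larger: "Y \<in> convex hull (S \<inter> G)" if "Y \<in> S" "J \<subset> active Y" for Y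
    proof -
      have "M - active Y \<subset> M - J"
        using that(2) J by (auto simp: active_def)
      then have "card (M - active Y) < k"
        using less.prems(2) finite_M psubset_card_mono[of "M - J"] by (simp add: J_def)
      then show ?thesis
        using less.IH that(1) by blast
    qed
    show ?case
      using sum_mem_hull[where R = "\<lambda>v. u v *\<^sub>R v", OF larger J F(1) terms] less.prems(1) X
      by blast
  qed
  then show "S \<subseteq> convex hull (S \<inter> G)"
    by blast
qed

end

end

lemma linear_trace_ip: "linear (trace_ip A)"
  by (rule linearI)
    (simp_all add: trace_ip_def distrib_left sum.distrib sum_distrib_left mult.left_commute)

lemma continuous_on_trace_ip: "continuous_on UNIV (trace_ip A)"
  by (rule linear_continuous_on) (metis linear_conv_bounded_linear linear_trace_ip)

lemma zero_in_psd_cone: "0 \<in> psd_cone"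
  by (simp add: psd_cone_def sym_mat_def transpose_def vec_eq_iff)

lemma zero_in_rank_one_mats: "0 \<in> rank_one_mats"
proof -
  have "outer 0 = 0"
    by (simp add: outer_def vec_eq_iff)
  then show ?thesis
    unfolding rank_one_mats_def by (metis rangeI)
qed

lemma scaleR_outer:
  assumes "0 \<le> c"
  shows "c *\<^sub>R outer x = outer (sqrt c *\<^sub>R x)"
proof -
  have "c * (a * b) = sqrt c * a * (sqrt c * b)" for a b
    using assms by (metis mult.assoc mult.left_commute real_sqrt_mult_self abs_of_nonneg)
  then show ?thesis
    by (simp add: outer_def vec_eq_iff)
qed

lemma cone_rank_one_mats: "cone rank_one_mats"
  unfolding cone_def rank_one_mats_def by (metis rangeI image_iff scaleR_outer)

lemma closed_S_set:
  fixes M :: "(real^'n^'n) set"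
  assumes "closed (psd_cone :: (real^'n^'n) set)"
  shows "closed (S_set M)"
proof -
  have "S_set M = psd_cone \<inter> (\<Inter>A\<in>M. {X. 0 \<le> trace_ip A X})"
    by (auto simp: S_set_def)
  moreover have "closed {X. 0 \<le> trace_ip A X}" for A :: "real^'n^'n"
    by (rule closed_Collect_le) (simp_all add: continuous_on_trace_ip)
  ultimately show ?thesis
    using assms by (simp add: closed_INT closed_Int)
qed

theorem lemma2p15:
  fixes M :: "(real^'n^'n) set"
  assumes "finite M"
    and "\<forall>A\<in>M. sym_mat A"
    and "\<forall>M'. M' \<subseteq> M \<longrightarrow> ROG (T_set M')"
  shows "ROG (S_set M)"
proof -
  have "ROG (T_set ({} :: (real^'n^'n) set))"
    using assms(3) by blast
  then have "ROG (psd_cone :: (real^'n^'n) set)"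
    by (simp add: T_set_def)
  then have psd: "closed (psd_cone :: (real^'n^'n) set)" "convex_cone (psd_cone :: (real^'n^'n) set)"
    using zero_in_psd_cone by (auto simp: ROG_def convex_cone_def conic_def cone_def)
  interpret constrained_cone psd_cone trace_ip M
    by (rule constrained_cone.intro) (simp_all add: assms(1) psd(2) linear_trace_ip)
  have S_set: "S_set M = S" and T_set: "T_set J = T J" for J
    by (simp_all add: S_set_def S_def T_set_def T_def)
  have "S = convex hull (S \<inter> rank_one_mats)"
    using S_eq_convex_hull[OF cone_rank_one_mats zero_in_rank_one_mats] assms(3)
    by (simp add: ROG_def T_set)
  moreover have "closed S"
    unfolding S_set[symmetric] by (rule closed_S_set[OF psd(1)])
  moreover have "S \<subseteq> psd_cone"
    by (auto simp: S_def)
  ultimately show ?thesis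
    using convex_cone_S unfolding ROG_def S_set
    by (auto simp: convex_cone_def conic_def cone_def)
qed

end
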